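(* Let $(M,g)$ be a 2-dimensional Riemannian manifold, $\lambda\in\mathbb{R}$, $X$ a smooth vector field satisfying $R_{ab}=\tfrac12X_aX_b-\nabla_{(a}X_{b)}+\lambda g_{ab}$, and $\Gamma>0$ a smooth function such that $K_a=\Gamma X_a+\nabla_a\Gamma$ is a Killing vector field of $g$. Then, with $R$ the scalar curvature of $g$, $$\Big(R-\frac{2\lambda}{3}\Big)\nabla_d\Gamma+\frac{2\Gamma}{3}\nabla_dR=2K^b\nabla_{[d}X_{b]},$$ and consequently $\big(R-\tfrac{2\lambda}{3}\big)\mathcal{L}_K\Gamma=0$.
   Context: $\nabla$ is the Levi-Civita connection of $g$; $[db]$ denotes antisymmetrisation with weight $1/2$. *)

theory Defs
  imports "HOL-Analysis.Analysis"
begin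

text \<open>Local-coordinate rendering of 2-dimensional Riemannian geometry.\<close>

type_synonym pt = "real^2"
type_synonym idx = "2"

definition pd :: "idx \<Rightarrow> (pt \<Rightarrow> real) \<Rightarrow> pt \<Rightarrow> real" where
  "pd i f x = deriv (\<lambda>t. f (x + t *\<^sub>R axis i 1)) 0"

definition smooth_on :: "pt set \<Rightarrow> (pt \<Rightarrow> real) \<Rightarrow> bool" where
  "smooth_on U f \<longleftrightarrow> (\<forall>is :: idx list. foldr pd is f differentiable_on U)"

definition riem_metric :: "pt set \<Rightarrow> (pt \<Rightarrow> idx \<Rightarrow> idx \<Rightarrow> real) \<Rightarrow> bool" where
  "riem_metric U g \<longleftrightarrow> open U \<and>
     (\<forall>i j. smooth_on U (\<lambda>x. g x i j)) \<and>
     (\<forall>x\<in>U. \<forall>i j. g x i j = g x j i) \<and>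
     (\<forall>x\<in>U. \<forall>v::real^2. v \<noteq> 0 \<longrightarrow> (\<Sum>i\<in>UNIV. \<Sum>j\<in>UNIV. g x i j * v$i * v$j) > 0)"

definition ginv :: "(pt \<Rightarrow> idx \<Rightarrow> idx \<Rightarrow> real) \<Rightarrow> pt \<Rightarrow> idx \<Rightarrow> idx \<Rightarrow> real" where
  "ginv g x i j = matrix_inv (\<chi> a b. g x a b) $ i $ j"

definition christ :: "(pt \<Rightarrow> idx \<Rightarrow> idx \<Rightarrow> real) \<Rightarrow> pt \<Rightarrow> idx \<Rightarrow> idx \<Rightarrow> idx \<Rightarrow> real" where
  "christ g x k i j = (1/2) * (\<Sum>l\<in>UNIV. ginv g x k l *
      (pd i (\<lambda>y. g y j l) x + pd j (\<lambda>y. g y i l) x - pd l (\<lambda>y. g y i j) x))"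

definition riemann :: "(pt \<Rightarrow> idx \<Rightarrow> idx \<Rightarrow> real) \<Rightarrow> pt \<Rightarrow> idx \<Rightarrow> idx \<Rightarrow> idx \<Rightarrow> idx \<Rightarrow> real" where
  "riemann g x r s m n =
     pd m (\<lambda>y. christ g y r n s) x - pd n (\<lambda>y. christ g y r m s) x
     + (\<Sum>l\<in>UNIV. christ g x r m l * christ g x l n s)
     - (\<Sum>l\<in>UNIV. christ g x r n l * christ g x l m s)"

text \<open>Ricci tensor R_{sn} = R^r_{srn} (positive for round spheres).\<close>
definition ricci :: "(pt \<Rightarrow> idx \<Rightarrow> idx \<Rightarrow> real) \<Rightarrow> pt \<Rightarrow> idx \<Rightarrow> idx \<Rightarrow> real" where
  "ricci g x s n = (\<Sum>r\<in>UNIV. riemann g x r s r n)"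

definition scal :: "(pt \<Rightarrow> idx \<Rightarrow> idx \<Rightarrow> real) \<Rightarrow> pt \<Rightarrow> real" where
  "scal g x = (\<Sum>a\<in>UNIV. \<Sum>b\<in>UNIV. ginv g x a b * ricci g x a b)"

definition cov1 :: "(pt \<Rightarrow> idx \<Rightarrow> idx \<Rightarrow> real) \<Rightarrow> (pt \<Rightarrow> idx \<Rightarrow> real) \<Rightarrow> pt \<Rightarrow> idx \<Rightarrow> idx \<Rightarrow> real" where
  "cov1 g X x a b = pd a (\<lambda>y. X y b) x - (\<Sum>c\<in>UNIV. christ g x c a b * X x c)"

definition raise :: "(pt \<Rightarrow> idx \<Rightarrow> idx \<Rightarrow> real) \<Rightarrow> (pt \<Rightarrow> idx \<Rightarrow> real) \<Rightarrow> pt \<Rightarrow> idx \<Rightarrow> real" where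
  "raise g K x a = (\<Sum>b\<in>UNIV. ginv g x a b * K x b)"

definition killing :: "pt set \<Rightarrow> (pt \<Rightarrow> idx \<Rightarrow> idx \<Rightarrow> real) \<Rightarrow> (pt \<Rightarrow> idx \<Rightarrow> real) \<Rightarrow> bool" where
  "killing U g K \<longleftrightarrow> (\<forall>a. smooth_on U (\<lambda>x. K x a)) \<and>
     (\<forall>x\<in>U. \<forall>a b. cov1 g K x a b + cov1 g K x b a = 0)"

end

theory Submission
  imports Defs
begin

text \<open>In dimension two \<open>R\<^sub>a\<^sub>b = (R/2) g\<^sub>a\<^sub>b\<close>. The symmetrised Killing equation for
  \<open>K = \<Gamma> X + d\<Gamma>\<close>, combined with the near-horizon equation, determines the Hessian of \<open>\<Gamma>\<close>
  in terms of \<open>\<Gamma>\<close>, \<open>X\<close>, \<open>R\<close> and \<open>\<lambda>\<close>. Differentiating that formula once more and inserting it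
  into the contracted Ricci identity \<open>\<nabla>\<^sup>b\<nabla>\<^sub>a\<nabla>\<^sub>b\<Gamma> - \<nabla>\<^sub>a\<nabla>\<^sup>b\<nabla>\<^sub>b\<Gamma> = (R/2) \<nabla>\<^sub>a\<Gamma>\<close>
  gives the first identity. Contracting it with \<open>K\<^sup>d\<close> kills the right-hand side by antisymmetry,
  and \<open>K\<^sup>d\<nabla>\<^sub>dR = 0\<close> because a Killing field preserves the curvature; this yields the second.\<close>

section \<open>Partial derivatives\<close>

abbreviation unit_vec :: "idx \<Rightarrow> pt" where "unit_vec i \<equiv> axis i 1"

lemma pd_has_real_derivative:
  assumes "f differentiable at x"
  shows "((\<lambda>t. f (x + t *\<^sub>R unit_vec i)) has_real_derivative pd i f x) (at 0)"
proof -
  have "(\<lambda>t::real. x + t *\<^sub>R unit_vec i) differentiable at 0"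
    by (intro derivative_intros)
  with assms have "(\<lambda>t. f (x + t *\<^sub>R unit_vec i)) differentiable at 0"
    using differentiable_chain_at[of "\<lambda>t. x + t *\<^sub>R unit_vec i" 0 f] by (simp add: o_def)
  then show ?thesis
    unfolding pd_def by (simp add: DERIV_deriv_iff_real_differentiable)
qed

lemma pd_eqI:
  assumes "((\<lambda>t. f (x + t *\<^sub>R unit_vec i)) has_real_derivative D) (at 0)"
  shows "pd i f x = D"
  unfolding pd_def using assms by (rule DERIV_imp_deriv)

lemma pd_const [simp]: "pd i (\<lambda>y. c) x = 0"
  by (rule pd_eqI) simp

lemma pd_add:
  "f differentiable at x \<Longrightarrow> g differentiable at x \<Longrightarrow> pd i (\<lambda>y. f y + g y) x = pd i f x + pd i g x"
  by (rule pd_eqI, intro DERIV_add pd_has_real_derivative)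

lemma pd_diff:
  "f differentiable at x \<Longrightarrow> g differentiable at x \<Longrightarrow> pd i (\<lambda>y. f y - g y) x = pd i f x - pd i g x"
  by (rule pd_eqI, intro DERIV_diff pd_has_real_derivative)

lemma pd_minus: "f differentiable at x \<Longrightarrow> pd i (\<lambda>y. - f y) x = - pd i f x"
  by (rule pd_eqI, intro DERIV_minus pd_has_real_derivative)

lemma pd_mult:
  "f differentiable at x \<Longrightarrow> g differentiable at x \<Longrightarrow>
   pd i (\<lambda>y. f y * g y) x = pd i f x * g x + f x * pd i g x"
  by (rule pd_eqI, rule DERIV_mult[THEN DERIV_cong], (rule pd_has_real_derivative, assumption)+, simp)

lemma pd_divide:
  "f differentiable at x \<Longrightarrow> g differentiable at x \<Longrightarrow> g x \<noteq> 0 \<Longrightarrow>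
   pd i (\<lambda>y. f y / g y) x = (pd i f x * g x - f x * pd i g x) / (g x * g x)"
  by (rule pd_eqI, rule DERIV_divide[THEN DERIV_cong], (rule pd_has_real_derivative, assumption)+)
    (simp_all add: power2_eq_square)

lemma pd_sum:
  "finite A \<Longrightarrow> (\<And>a. a \<in> A \<Longrightarrow> f a differentiable at x) \<Longrightarrow>
   pd i (\<lambda>y. \<Sum>a\<in>A. f a y) x = (\<Sum>a\<in>A. pd i (f a) x)"
  by (rule pd_eqI, rule DERIV_sum, rule pd_has_real_derivative, auto)

lemma pd_cong_open:
  assumes "open U" "x \<in> U" "\<And>y. y \<in> U \<Longrightarrow> f y = g y"
  shows "pd i f x = pd i g x"
proof -
  have "open ((\<lambda>t::real. x + t *\<^sub>R unit_vec i) -` U)"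
    by (intro continuous_open_vimage assms(1) continuous_intros)
  then have "\<forall>\<^sub>F t in nhds 0. t \<in> (\<lambda>t::real. x + t *\<^sub>R unit_vec i) -` U"
    using assms(2) by (intro eventually_nhds_in_open) auto
  then have "\<forall>\<^sub>F t in nhds 0. f (x + t *\<^sub>R unit_vec i) = g (x + t *\<^sub>R unit_vec i)"
    by eventually_elim (use assms(3) in auto)
  then show ?thesis
    unfolding pd_def by (rule deriv_cong_ev) simp
qed

lemma foldr_pd_cong_open:
  assumes "open U" "\<And>y. y \<in> U \<Longrightarrow> f y = g y" "y \<in> U"
  shows "foldr pd is f y = foldr pd is g y"
  using assms(3)
proof (induction "is" arbitrary: y)
  case Nil
  then show ?case using assms(2) by simp
next
  case (Cons i js)
  have "pd i (foldr pd js f) y = pd i (foldr pd js g) y"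
    using Cons by (intro pd_cong_open[OF assms(1)]) auto
  then show ?case by simp
qed

section \<open>Smooth functions\<close>

definition differentiable_upto :: "pt set \<Rightarrow> nat \<Rightarrow> (pt \<Rightarrow> real) \<Rightarrow> bool" where
  "differentiable_upto U n f \<longleftrightarrow> (\<forall>is::idx list. length is \<le> n \<longrightarrow> foldr pd is f differentiable_on U)"

lemma smooth_on_iff_differentiable_upto: "smooth_on U f \<longleftrightarrow> (\<forall>n. differentiable_upto U n f)"
  unfolding smooth_on_def differentiable_upto_def by auto

lemma differentiable_upto_imp_differentiable_on: "differentiable_upto U n f \<Longrightarrow> f differentiable_on U"
  unfolding differentiable_upto_def by (drule spec[of _ "[]"]) simp

lemma differentiable_upto_Suc_imp: "differentiable_upto U (Suc n) f \<Longrightarrow> differentiable_upto U n f"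
  unfolding differentiable_upto_def by auto

lemma differentiable_upto_pd: "differentiable_upto U (Suc n) f \<Longrightarrow> differentiable_upto U n (pd i f)"
  unfolding differentiable_upto_def
proof (intro allI impI)
  fix "is" :: "idx list"
  assume f: "\<forall>is::idx list. length is \<le> Suc n \<longrightarrow> foldr pd is f differentiable_on U"
    and "length is \<le> n"
  then have "foldr pd (is @ [i]) f differentiable_on U"
    using f[rule_format, of "is @ [i]"] by simp
  then show "foldr pd is (pd i f) differentiable_on U" by simp
qed

lemma differentiable_upto_SucI:
  assumes "f differentiable_on U" "\<And>i. differentiable_upto U n (pd i f)"
  shows "differentiable_upto U (Suc n) f"
  unfolding differentiable_upto_def
proof (intro allI impI)
  fix "is" :: "idx list"
  assume "length is \<le> Suc n"
  then show "foldr pd is f differentiable_on U"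
    using assms by (cases "is" rule: rev_cases) (auto simp: differentiable_upto_def)
qed

lemma differentiable_on_cong:
  assumes "f differentiable_on U" "\<And>y. y \<in> U \<Longrightarrow> f y = g y"
  shows "g differentiable_on U"
  unfolding differentiable_on_def
proof
  fix x assume "x \<in> U"
  then show "g differentiable at x within U"
    using assms by (intro differentiable_transform_within[of f x U 1 g]) (auto simp: differentiable_on_def)
qed

lemma differentiable_upto_cong_open:
  assumes "open U" "differentiable_upto U n f" "\<And>y. y \<in> U \<Longrightarrow> f y = g y"
  shows "differentiable_upto U n g"
  unfolding differentiable_upto_def
proof (intro allI impI)
  fix "is" :: "idx list"
  assume "length is \<le> n"
  with assms(2) have "foldr pd is f differentiable_on U"
    unfolding differentiable_upto_def by blast
  then show "foldr pd is g differentiable_on U"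
    by (rule differentiable_on_cong) (rule foldr_pd_cong_open[OF assms(1,3)])
qed

lemma differentiable_upto_imp_differentiable_at:
  "open U \<Longrightarrow> differentiable_upto U n f \<Longrightarrow> x \<in> U \<Longrightarrow> f differentiable at x"
  using differentiable_upto_imp_differentiable_on differentiable_on_eq_differentiable_at by blast

lemma differentiable_upto_const: "differentiable_upto U n (\<lambda>y. c)"
proof (induction n arbitrary: c)
  case 0
  then show ?case unfolding differentiable_upto_def by auto
next
  case (Suc n)
  have "pd i (\<lambda>y. c) = (\<lambda>y. 0)" for i
    by (rule ext) simp
  then show ?case
    using Suc.IH by (intro differentiable_upto_SucI) auto
qed

context
  fixes U :: "pt set"
  assumes open_U: "open U"
begin

lemma differentiable_upto_add:
  "differentiable_upto U n f \<Longrightarrow> differentiable_upto U n g \<Longrightarrow> differentiable_upto U n (\<lambda>y. f y + g y)"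
proof (induction n arbitrary: f g)
  case 0
  then show ?case by (auto simp: differentiable_upto_def intro: differentiable_on_add)
next
  case (Suc n)
  show ?case
  proof (rule differentiable_upto_SucI)
    show "(\<lambda>y. f y + g y) differentiable_on U"
      using Suc.prems by (intro differentiable_on_add differentiable_upto_imp_differentiable_on)
    fix i
    have pd_formula: "differentiable_upto U n (\<lambda>y. pd i f y + pd i g y)"
      using Suc by (simp add: differentiable_upto_pd)
    show "differentiable_upto U n (pd i (\<lambda>y. f y + g y))"
      by (rule differentiable_upto_cong_open[OF open_U pd_formula])
        (use Suc.prems in \<open>simp add: pd_add differentiable_upto_imp_differentiable_at[OF open_U]\<close>)
  qed
qed

lemma differentiable_upto_mult:
  "differentiable_upto U n f \<Longrightarrow> differentiable_upto U n g \<Longrightarrow> differentiable_upto U n (\<lambda>y. f y * g y)"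
proof (induction n arbitrary: f g)
  case 0
  then show ?case by (auto simp: differentiable_upto_def intro: differentiable_on_mult)
next
  case (Suc n)
  show ?case
  proof (rule differentiable_upto_SucI)
    show "(\<lambda>y. f y * g y) differentiable_on U"
      using Suc.prems by (intro differentiable_on_mult differentiable_upto_imp_differentiable_on)
    fix i
    have pd_formula: "differentiable_upto U n (\<lambda>y. pd i f y * g y + f y * pd i g y)"
      using Suc by (intro differentiable_upto_add) (simp_all add: differentiable_upto_pd differentiable_upto_Suc_imp)
    show "differentiable_upto U n (pd i (\<lambda>y. f y * g y))"
      by (rule differentiable_upto_cong_open[OF open_U pd_formula])
        (use Suc.prems in \<open>simp add: pd_mult differentiable_upto_imp_differentiable_at[OF open_U]\<close>)
  qed
qed

lemma differentiable_upto_divide: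
  "differentiable_upto U n f \<Longrightarrow> differentiable_upto U n g \<Longrightarrow> (\<forall>y\<in>U. g y \<noteq> 0) \<Longrightarrow>
   differentiable_upto U n (\<lambda>y. f y / g y)"
proof (induction n arbitrary: f g)
  case 0
  then show ?case by (auto simp: differentiable_upto_def differentiable_on_def intro: differentiable_divide)
next
  case (Suc n)
  show ?case
  proof (rule differentiable_upto_SucI)
    show "(\<lambda>y. f y / g y) differentiable_on U"
      using Suc.prems differentiable_upto_imp_differentiable_on
      by (auto simp: differentiable_on_def intro: differentiable_divide)
    fix i
    have f: "differentiable_upto U n f" "differentiable_upto U n (pd i f)"
      and g: "differentiable_upto U n g" "differentiable_upto U n (pd i g)"
      using Suc.prems by (simp_all add: differentiable_upto_pd differentiable_upto_Suc_imp)
    have pd_formula: "differentiable_upto U n (\<lambda>y. (pd i f y * g y + (-1) * (f y * pd i g y)) / (g y * g y))"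
      using f g Suc.prems(3)
      by (intro Suc.IH differentiable_upto_add differentiable_upto_mult differentiable_upto_const) auto
    show "differentiable_upto U n (pd i (\<lambda>y. f y / g y))"
      by (rule differentiable_upto_cong_open[OF open_U pd_formula])
        (use Suc.prems in \<open>simp add: pd_divide differentiable_upto_imp_differentiable_at[OF open_U]\<close>)
  qed
qed

end

lemma smooth_on_const [simp]: "smooth_on U (\<lambda>y. c)"
  by (simp add: smooth_on_iff_differentiable_upto differentiable_upto_const)

lemma smooth_on_pd [simp]: "smooth_on U f \<Longrightarrow> smooth_on U (pd i f)"
  by (simp add: smooth_on_iff_differentiable_upto differentiable_upto_pd)

lemma smooth_on_If [simp]: "smooth_on U f \<Longrightarrow> smooth_on U g \<Longrightarrow> smooth_on U (\<lambda>y. if P then f y else g y)"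
  by (cases P) simp_all

context
  fixes U :: "pt set"
  assumes open_U: "open U"
begin

lemma smooth_on_imp_differentiable_at: "smooth_on U f \<Longrightarrow> x \<in> U \<Longrightarrow> f differentiable at x"
  by (meson differentiable_upto_imp_differentiable_at open_U smooth_on_iff_differentiable_upto)

lemma smooth_on_cong: "smooth_on U f \<Longrightarrow> (\<And>y. y \<in> U \<Longrightarrow> f y = g y) \<Longrightarrow> smooth_on U g"
  using differentiable_upto_cong_open[OF open_U] by (meson smooth_on_iff_differentiable_upto)

lemma smooth_on_add [simp]: "smooth_on U f \<Longrightarrow> smooth_on U g \<Longrightarrow> smooth_on U (\<lambda>y. f y + g y)"
  by (simp add: smooth_on_iff_differentiable_upto differentiable_upto_add[OF open_U])

lemma smooth_on_mult [simp]: "smooth_on U f \<Longrightarrow> smooth_on U g \<Longrightarrow> smooth_on U (\<lambda>y. f y * g y)"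
  by (simp add: smooth_on_iff_differentiable_upto differentiable_upto_mult[OF open_U])

lemma smooth_on_divide:
  "smooth_on U f \<Longrightarrow> smooth_on U g \<Longrightarrow> (\<forall>y\<in>U. g y \<noteq> 0) \<Longrightarrow> smooth_on U (\<lambda>y. f y / g y)"
  by (simp add: smooth_on_iff_differentiable_upto differentiable_upto_divide[OF open_U])

lemma smooth_on_minus [simp]: "smooth_on U f \<Longrightarrow> smooth_on U (\<lambda>y. - f y)"
  using smooth_on_mult[OF smooth_on_const, of f "-1"] by simp

lemma smooth_on_diff [simp]: "smooth_on U f \<Longrightarrow> smooth_on U g \<Longrightarrow> smooth_on U (\<lambda>y. f y - g y)"
  using smooth_on_add[OF _ smooth_on_minus, of f g] by simp

lemma smooth_on_divide_const [simp]: "smooth_on U f \<Longrightarrow> smooth_on U (\<lambda>y. f y / c)"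
  using smooth_on_mult[OF _ smooth_on_const, of f "1 / c"] by simp

lemma smooth_on_sum [simp]:
  "finite A \<Longrightarrow> (\<And>a. a \<in> A \<Longrightarrow> smooth_on U (f a)) \<Longrightarrow> smooth_on U (\<lambda>y. \<Sum>a\<in>A. f a y)"
  by (induction A rule: finite_induct) auto

lemma pd_add_smooth:
  "smooth_on U f \<Longrightarrow> smooth_on U g \<Longrightarrow> x \<in> U \<Longrightarrow> pd i (\<lambda>y. f y + g y) x = pd i f x + pd i g x"
  by (intro pd_add smooth_on_imp_differentiable_at)

lemma pd_diff_smooth:
  "smooth_on U f \<Longrightarrow> smooth_on U g \<Longrightarrow> x \<in> U \<Longrightarrow> pd i (\<lambda>y. f y - g y) x = pd i f x - pd i g x"
  by (intro pd_diff smooth_on_imp_differentiable_at)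

lemma pd_minus_smooth: "smooth_on U f \<Longrightarrow> x \<in> U \<Longrightarrow> pd i (\<lambda>y. - f y) x = - pd i f x"
  by (intro pd_minus smooth_on_imp_differentiable_at)

lemma pd_mult_smooth:
  "smooth_on U f \<Longrightarrow> smooth_on U g \<Longrightarrow> x \<in> U \<Longrightarrow> pd i (\<lambda>y. f y * g y) x = pd i f x * g x + f x * pd i g x"
  by (intro pd_mult smooth_on_imp_differentiable_at)

lemma pd_divide_smooth:
  "smooth_on U f \<Longrightarrow> smooth_on U g \<Longrightarrow> x \<in> U \<Longrightarrow> g x \<noteq> 0 \<Longrightarrow>
   pd i (\<lambda>y. f y / g y) x = (pd i f x * g x - f x * pd i g x) / (g x * g x)"
  by (intro pd_divide smooth_on_imp_differentiable_at)

lemma pd_divide_const_smooth: "smooth_on U f \<Longrightarrow> x \<in> U \<Longrightarrow> pd i (\<lambda>y. f y / c) x = pd i f x / c"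
  by (intro pd_eqI DERIV_cdivide pd_has_real_derivative smooth_on_imp_differentiable_at)

lemma pd_sum_smooth:
  "finite A \<Longrightarrow> (\<And>a. a \<in> A \<Longrightarrow> smooth_on U (f a)) \<Longrightarrow> x \<in> U \<Longrightarrow>
   pd i (\<lambda>y. \<Sum>a\<in>A. f a y) x = (\<Sum>a\<in>A. pd i (f a) x)"
  by (intro pd_sum smooth_on_imp_differentiable_at)

lemmas pd_smooth_simps =
  pd_add_smooth pd_diff_smooth pd_minus_smooth pd_mult_smooth pd_divide_const_smooth pd_sum_smooth

end

section \<open>Symmetry of second partial derivatives\<close>

lemma pd_has_real_derivative_along_line:
  assumes "f differentiable at (z + s *\<^sub>R unit_vec i)"
  shows "((\<lambda>s. f (z + s *\<^sub>R unit_vec i)) has_real_derivative pd i f (z + s *\<^sub>R unit_vec i)) (at s)"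
proof -
  have "((\<lambda>t. f ((z + s *\<^sub>R unit_vec i) + t *\<^sub>R unit_vec i)) has_real_derivative
      pd i f (z + s *\<^sub>R unit_vec i)) (at 0)"
    by (rule pd_has_real_derivative[OF assms])
  then have "((\<lambda>t. f (z + (t + s) *\<^sub>R unit_vec i)) has_real_derivative pd i f (z + s *\<^sub>R unit_vec i)) (at 0)"
    by (simp add: scaleR_add_left algebra_simps)
  then show ?thesis
    using DERIV_shift[of "\<lambda>s. f (z + s *\<^sub>R unit_vec i)" _ 0 s] by simp
qed

lemma dist_add_axes_le: "dist (x + s *\<^sub>R unit_vec i + t *\<^sub>R unit_vec j) x \<le> \<bar>s\<bar> + \<bar>t\<bar>"
proof -
  have "dist (x + s *\<^sub>R unit_vec i + t *\<^sub>R unit_vec j) x = norm (s *\<^sub>R unit_vec i + t *\<^sub>R unit_vec j)"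
    by (simp add: dist_norm)
  also have "\<dots> \<le> norm (s *\<^sub>R unit_vec i) + norm (t *\<^sub>R unit_vec j)"
    by (rule norm_triangle_ineq)
  finally show ?thesis by simp
qed

lemma second_difference_mean_value:
  assumes U: "open U" "cball x (2 * h) \<subseteq> U" and f: "smooth_on U f" and h: "0 < h"
  obtains p where "dist p x \<le> 2 * h"
    "f (x + h *\<^sub>R unit_vec i + h *\<^sub>R unit_vec j) - f (x + h *\<^sub>R unit_vec i) - f (x + h *\<^sub>R unit_vec j) + f x
       = h * h * pd j (pd i f) p"
proof -
  have box: "dist (x + s *\<^sub>R unit_vec i + t *\<^sub>R unit_vec j) x \<le> 2 * h"
    if "0 \<le> s" "s \<le> h" "0 \<le> t" "t \<le> h" for s t
    using dist_add_axes_le[of x s i t j] that by simp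
  have in_U: "x + s *\<^sub>R unit_vec i + t *\<^sub>R unit_vec j \<in> U"
    if "0 \<le> s" "s \<le> h" "0 \<le> t" "t \<le> h" for s t
    using box[OF that] U(2) by (auto simp: dist_commute)
  have diff: "g differentiable at y" if "smooth_on U g" "y \<in> U" for g y
    using smooth_on_imp_differentiable_at[OF U(1) that] .
  obtain \<xi> where \<xi>: "0 < \<xi>" "\<xi> < h" and first:
    "(f (x + h *\<^sub>R unit_vec j + h *\<^sub>R unit_vec i) - f (x + h *\<^sub>R unit_vec i))
     - (f (x + h *\<^sub>R unit_vec j + 0 *\<^sub>R unit_vec i) - f (x + 0 *\<^sub>R unit_vec i))
     = (h - 0) * (pd i f (x + h *\<^sub>R unit_vec j + \<xi> *\<^sub>R unit_vec i) - pd i f (x + \<xi> *\<^sub>R unit_vec i))"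
  proof (atomize_elim, rule MVT2[OF h])
    fix s assume s: "0 \<le> s" "s \<le> h"
    then have "x + h *\<^sub>R unit_vec j + s *\<^sub>R unit_vec i \<in> U" "x + s *\<^sub>R unit_vec i \<in> U"
      using in_U[OF s, of h] in_U[OF s, of 0] h by (simp_all add: add_ac)
    then show "((\<lambda>s. f (x + h *\<^sub>R unit_vec j + s *\<^sub>R unit_vec i) - f (x + s *\<^sub>R unit_vec i)) has_real_derivative
        pd i f (x + h *\<^sub>R unit_vec j + s *\<^sub>R unit_vec i) - pd i f (x + s *\<^sub>R unit_vec i)) (at s)"
      by (intro DERIV_diff pd_has_real_derivative_along_line diff[OF f])
  qed
  obtain \<eta> where \<eta>: "0 < \<eta>" "\<eta> < h" and second:
    "pd i f (x + \<xi> *\<^sub>R unit_vec i + h *\<^sub>R unit_vec j) - pd i f (x + \<xi> *\<^sub>R unit_vec i + 0 *\<^sub>R unit_vec j)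
     = (h - 0) * pd j (pd i f) (x + \<xi> *\<^sub>R unit_vec i + \<eta> *\<^sub>R unit_vec j)"
  proof (atomize_elim, rule MVT2[OF h])
    fix t assume "0 \<le> t" "t \<le> h"
    then have "x + \<xi> *\<^sub>R unit_vec i + t *\<^sub>R unit_vec j \<in> U"
      using in_U \<xi> by simp
    then show "((\<lambda>t. pd i f (x + \<xi> *\<^sub>R unit_vec i + t *\<^sub>R unit_vec j)) has_real_derivative
        pd j (pd i f) (x + \<xi> *\<^sub>R unit_vec i + t *\<^sub>R unit_vec j)) (at t)"
      by (intro pd_has_real_derivative_along_line diff smooth_on_pd f)
  qed
  show ?thesis
  proof
    show "dist (x + \<xi> *\<^sub>R unit_vec i + \<eta> *\<^sub>R unit_vec j) x \<le> 2 * h"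
      using box \<xi> \<eta> by simp
    show "f (x + h *\<^sub>R unit_vec i + h *\<^sub>R unit_vec j) - f (x + h *\<^sub>R unit_vec i) - f (x + h *\<^sub>R unit_vec j) + f x
        = h * h * pd j (pd i f) (x + \<xi> *\<^sub>R unit_vec i + \<eta> *\<^sub>R unit_vec j)"
      using first second by (simp add: add_ac algebra_simps)
  qed
qed

lemma pd_pd_commute:
  assumes U: "open U" and f: "smooth_on U f" and x: "x \<in> U"
  shows "pd i (pd j f) x = pd j (pd i f) x"
proof -
  have cont: "isCont (pd k (pd l f)) x" for k l
    by (intro differentiable_imp_continuous_within smooth_on_imp_differentiable_at[OF U _ x]) (simp add: f)
  \<comment> \<open>Both second derivatives are limits of the same second difference, which is symmetric in \<open>i\<close>, \<open>j\<close>.\<close>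
  have close: "\<bar>pd i (pd j f) x - pd j (pd i f) x\<bar> < 2 * \<epsilon>" if "0 < \<epsilon>" for \<epsilon>
  proof -
    obtain d1 where d1: "0 < d1" "\<And>p. dist p x < d1 \<Longrightarrow> dist (pd j (pd i f) p) (pd j (pd i f) x) < \<epsilon>"
      using cont \<open>0 < \<epsilon>\<close> unfolding continuous_at_eps_delta by blast
    obtain d2 where d2: "0 < d2" "\<And>p. dist p x < d2 \<Longrightarrow> dist (pd i (pd j f) p) (pd i (pd j f) x) < \<epsilon>"
      using cont \<open>0 < \<epsilon>\<close> unfolding continuous_at_eps_delta by blast
    obtain r where r: "0 < r" "ball x r \<subseteq> U"
      using U x open_contains_ball by blast
    define h where "h = min r (min d1 d2) / 4"
    have h: "0 < h" "2 * h < d1" "2 * h < d2" and "cball x (2 * h) \<subseteq> U"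
      using r d1 d2 unfolding h_def by auto
    then obtain p q where p: "dist p x \<le> 2 * h"
        "f (x + h *\<^sub>R unit_vec i + h *\<^sub>R unit_vec j) - f (x + h *\<^sub>R unit_vec i) - f (x + h *\<^sub>R unit_vec j) + f x
         = h * h * pd j (pd i f) p"
      and q: "dist q x \<le> 2 * h"
        "f (x + h *\<^sub>R unit_vec j + h *\<^sub>R unit_vec i) - f (x + h *\<^sub>R unit_vec j) - f (x + h *\<^sub>R unit_vec i) + f x
         = h * h * pd i (pd j f) q"
      using second_difference_mean_value[OF U _ f] by metis
    have "h * h * pd j (pd i f) p = h * h * pd i (pd j f) q"
      using p(2) q(2) by (simp add: add_ac diff_diff_eq2 algebra_simps)
    then have "pd j (pd i f) p = pd i (pd j f) q"
      using h(1) by simp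
    moreover have "dist (pd j (pd i f) p) (pd j (pd i f) x) < \<epsilon>" "dist (pd i (pd j f) q) (pd i (pd j f) x) < \<epsilon>"
      using d1(2) d2(2) p(1) q(1) h by simp_all
    ultimately show ?thesis
      unfolding dist_real_def by linarith
  qed
  show ?thesis
  proof (rule ccontr)
    assume "pd i (pd j f) x \<noteq> pd j (pd i f) x"
    then show False
      using close[of "\<bar>pd i (pd j f) x - pd j (pd i f) x\<bar> / 2"] by simp
  qed
qed

section \<open>Symmetric 2-by-2 matrices\<close>

definition det2 :: "(idx \<Rightarrow> idx \<Rightarrow> real) \<Rightarrow> real" where
  "det2 G = G 1 1 * G 2 2 - G 1 2 * G 2 1"

definition adj2 :: "(idx \<Rightarrow> idx \<Rightarrow> real) \<Rightarrow> idx \<Rightarrow> idx \<Rightarrow> real" where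
  "adj2 G i j = (if i = 1 \<and> j = 1 then G 2 2 else if i = 2 \<and> j = 2 then G 1 1 else - G i j)"

definition inv2 :: "(idx \<Rightarrow> idx \<Rightarrow> real) \<Rightarrow> idx \<Rightarrow> idx \<Rightarrow> real" where
  "inv2 G i j = adj2 G i j / det2 G"

lemma adj2_simps: "adj2 G 1 1 = G 2 2" "adj2 G 2 2 = G 1 1" "adj2 G 1 2 = - G 1 2" "adj2 G 2 1 = - G 2 1"
  unfolding adj2_def by auto

lemma inv2_simps:
  "inv2 G 1 1 = G 2 2 / det2 G" "inv2 G 2 2 = G 1 1 / det2 G"
  "inv2 G 1 2 = - G 1 2 / det2 G" "inv2 G 2 1 = - G 2 1 / det2 G"
  unfolding inv2_def adj2_def by auto

lemma matrix_inv_eqI: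
  fixes A B :: "'a::field ^'n^'n"
  assumes "A ** B = mat 1" "B ** A = mat 1"
  shows "matrix_inv A = B"
proof -
  have "\<exists>A'. A ** A' = mat 1 \<and> A' ** A = mat 1"
    using assms by blast
  then have C: "A ** matrix_inv A = mat 1" "matrix_inv A ** A = mat 1"
    using someI_ex unfolding matrix_inv_def by (metis (mono_tags, lifting))+
  have "matrix_inv A = matrix_inv A ** (A ** B)"
    using assms by (simp add: matrix_mul_rid)
  also have "\<dots> = B"
    using C by (simp add: matrix_mul_assoc matrix_mul_lid)
  finally show ?thesis .
qed

locale sym_matrix2 =
  fixes G :: "idx \<Rightarrow> idx \<Rightarrow> real"
  assumes sym: "G 2 1 = G 1 2" and det_nonzero: "det2 G \<noteq> 0"
begin

lemma matrix_inv_eq_inv2: "matrix_inv (\<chi> a b. G a b) = (\<chi> a b. inv2 G a b)"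
  using det_nonzero
  by (intro matrix_inv_eqI)
    (simp_all add: vec_eq_iff forall_2 matrix_matrix_mult_def sum_2 mat_def inv2_simps field_simps,
     simp_all add: det2_def algebra_simps)

text \<open>In the following lemmas \<open>D k i j\<close> stands for \<open>\<partial>\<^sub>k g\<^sub>i\<^sub>j\<close> at a point, so the sums
  \<open>1/2 * (\<Sum>m. inv2 G l m * (\<dots>))\<close> are the Christoffel symbols.\<close>

lemma christoffel_compatible:
  fixes D :: "idx \<Rightarrow> idx \<Rightarrow> idx \<Rightarrow> real"
  assumes D_sym: "\<And>a. D a 2 1 = D a 1 2"
  shows "D k i j = (\<Sum>l\<in>UNIV. (1/2 * (\<Sum>m\<in>UNIV. inv2 G l m * (D k i m + D i k m - D m k i))) * G l j
                        + (1/2 * (\<Sum>m\<in>UNIV. inv2 G l m * (D k j m + D j k m - D m k j))) * G i l)"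
  using exhaust_2[of k] exhaust_2[of i] exhaust_2[of j] det_nonzero
  by (elim disjE) (simp_all add: sum_2 inv2_simps sym D_sym field_simps, simp_all add: det2_def sym algebra_simps)

lemma trace_christoffel:
  fixes D :: "idx \<Rightarrow> idx \<Rightarrow> idx \<Rightarrow> real"
  assumes D_sym: "\<And>a. D a 2 1 = D a 1 2"
  shows "(\<Sum>e\<in>UNIV. 1/2 * (\<Sum>m\<in>UNIV. inv2 G e m * (D c e m + D e c m - D m c e)))
     = (D c 1 1 * G 2 2 + G 1 1 * D c 2 2 - D c 1 2 * G 2 1 - G 1 2 * D c 2 1) / (2 * det2 G)"
  using exhaust_2[of c] det_nonzero
  by (elim disjE) (simp_all add: sum_2 inv2_simps sym D_sym field_simps)

text \<open>\<open>A e b\<close> stands for \<open>R\<^sup>e\<^sub>b\<^sub>1\<^sub>2\<close>, the only independent part of the curvature in dimension two.\<close>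

lemma ricci_eq_half_trace:
  fixes A ric :: "idx \<Rightarrow> idx \<Rightarrow> real"
  assumes anti: "\<And>f b. (\<Sum>e\<in>UNIV. G f e * A e b) + (\<Sum>e\<in>UNIV. G b e * A e f) = 0"
    and ric: "\<And>b. ric b 1 = - A 2 b" "\<And>b. ric b 2 = A 1 b"
  shows "ric a b = (\<Sum>a\<in>UNIV. \<Sum>b\<in>UNIV. inv2 G a b * ric a b) / 2 * G a b"
proof -
  define d where "d = det2 G"
  have d: "d = G 1 1 * G 2 2 - G 1 2 * G 1 2" "d \<noteq> 0"
    using det_nonzero sym unfolding d_def det2_def by simp_all
  have a1: "G 1 1 * A 1 1 + G 1 2 * A 2 1 = 0"
    using anti[of 1 1] by (simp add: sum_2 algebra_simps)
  have a2: "G 1 2 * A 1 2 + G 2 2 * A 2 2 = 0"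
    using anti[of 2 2] by (simp add: sum_2 sym algebra_simps)
  have a3: "G 1 1 * A 1 2 + G 1 2 * A 2 2 + G 1 2 * A 1 1 + G 2 2 * A 2 1 = 0"
    using anti[of 1 2] by (simp add: sum_2 sym algebra_simps)
  define w where "w = G 1 1 * A 1 2 + G 1 2 * A 2 2"
  have "A 1 1 * d = G 1 2 * w" "A 2 1 * d = - G 1 1 * w" "A 1 2 * d = G 2 2 * w" "A 2 2 * d = - G 1 2 * w"
    using a1 a2 a3 unfolding w_def d(1) by algebra+
  then have A: "A 1 1 = G 1 2 * w / d" "A 2 1 = - G 1 1 * w / d" "A 1 2 = G 2 2 * w / d" "A 2 2 = - G 1 2 * w / d"
    using d(2) by (simp_all add: field_simps)
  show ?thesis
    using exhaust_2[of a] exhaust_2[of b] d(2)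
    by (elim disjE) (simp_all add: sum_2 inv2_simps sym ric A field_simps flip: d_def, simp_all add: d(1) algebra_simps)
qed

lemma rotated_curl_eq_det_divergence:
  fixes D :: "idx \<Rightarrow> idx \<Rightarrow> idx \<Rightarrow> real" and K :: "idx \<Rightarrow> real" and DK :: "idx \<Rightarrow> idx \<Rightarrow> real"
  assumes D_sym: "\<And>a. D a 2 1 = D a 1 2"
  defines "C \<equiv> \<lambda>k i j. 1/2 * (\<Sum>m\<in>UNIV. inv2 G k m * (D i j m + D j i m - D m i j))"
  defines "tr \<equiv> \<lambda>c. \<Sum>e\<in>UNIV. C e c e"
  defines "V \<equiv> \<lambda>c. G c 2 * K 1 - G c 1 * K 2"
  shows "(D 1 2 2 * K 1 + G 2 2 * DK 1 1 - (D 1 2 1 * K 2 + G 2 1 * DK 1 2))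
       - (D 2 1 2 * K 1 + G 1 2 * DK 2 1 - (D 2 1 1 * K 2 + G 1 1 * DK 2 2))
       - tr 1 * V 2 + tr 2 * V 1
     = det2 G * (\<Sum>a\<in>UNIV. \<Sum>b\<in>UNIV. inv2 G a b * (DK a b - (\<Sum>e\<in>UNIV. C e a b * K e)))"
    (is "?Z - tr 1 * V 2 + tr 2 * V 1 = _")
proof -
  define d where "d = det2 G"
  note adj = adj2_simps[of G, unfolded sym]
  define Cd where "Cd k i j = 1/2 * (\<Sum>m\<in>UNIV. adj2 G k m * (D i j m + D j i m - D m i j))" for k i j
  have C_Cd: "C k i j = Cd k i j / d" for k i j
    unfolding C_def Cd_def inv2_def d_def using det_nonzero by (simp add: sum_2 field_simps)
  have poly: "d * ?Z - (\<Sum>e\<in>UNIV. Cd e 1 e) * V 2 + (\<Sum>e\<in>UNIV. Cd e 2 e) * V 1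
      = d * (\<Sum>a\<in>UNIV. \<Sum>b\<in>UNIV. adj2 G a b * DK a b)
        - (\<Sum>a\<in>UNIV. \<Sum>b\<in>UNIV. adj2 G a b * (\<Sum>e\<in>UNIV. Cd e a b * K e))"
    unfolding Cd_def V_def d_def det2_def by (simp add: sum_2 adj sym D_sym field_simps)
  have lhs: "d * (?Z - tr 1 * V 2 + tr 2 * V 1)
      = d * ?Z - (\<Sum>e\<in>UNIV. Cd e 1 e) * V 2 + (\<Sum>e\<in>UNIV. Cd e 2 e) * V 1"
    unfolding tr_def C_Cd using det_nonzero by (simp add: d_def sum_divide_distrib[symmetric] algebra_simps)
  have pointwise: "d * (d * (inv2 G a b * (DK a b - (\<Sum>e\<in>UNIV. C e a b * K e))))
      = d * (adj2 G a b * DK a b) - adj2 G a b * (\<Sum>e\<in>UNIV. Cd e a b * K e)" for a b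
    unfolding inv2_def C_Cd using det_nonzero by (simp add: d_def sum_2 field_simps)
  have rhs: "d * (d * (\<Sum>a\<in>UNIV. \<Sum>b\<in>UNIV. inv2 G a b * (DK a b - (\<Sum>e\<in>UNIV. C e a b * K e))))
      = d * (\<Sum>a\<in>UNIV. \<Sum>b\<in>UNIV. adj2 G a b * DK a b)
        - (\<Sum>a\<in>UNIV. \<Sum>b\<in>UNIV. adj2 G a b * (\<Sum>e\<in>UNIV. Cd e a b * K e))"
    by (simp only: sum_distrib_left pointwise) (simp add: sum_subtractf sum_distrib_left)
  have "d * (?Z - tr 1 * V 2 + tr 2 * V 1)
      = d * (d * (\<Sum>a\<in>UNIV. \<Sum>b\<in>UNIV. inv2 G a b * (DK a b - (\<Sum>e\<in>UNIV. C e a b * K e))))"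
    unfolding lhs rhs poly ..
  then show ?thesis
    using det_nonzero unfolding d_def by simp
qed

end

lemma det2_pos_if_pos_definite:
  assumes sym: "G 2 1 = G 1 2"
    and pos: "\<And>v::real^2. v \<noteq> 0 \<Longrightarrow> (\<Sum>i\<in>UNIV. \<Sum>j\<in>UNIV. G i j * v$i * v$j) > 0"
  shows "det2 G > 0"
proof -
  have "(\<Sum>i\<in>UNIV. \<Sum>j\<in>UNIV. G i j * unit_vec 1 $ i * unit_vec 1 $ j) > 0"
    by (rule pos) (simp add: vec_eq_iff axis_def)
  then have G11: "G 1 1 > 0"
    by (simp add: sum_2 axis_def)
  \<comment> \<open>On \<open>v = (- G 1 2, G 1 1)\<close> the quadratic form takes the value \<open>G 1 1 * det2 G\<close>.\<close>
  define v :: "real^2" where "v = (\<chi> i. if i = 1 then - G 1 2 else G 1 1)"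
  have v: "v$1 = - G 1 2" "v$2 = G 1 1"
    unfolding v_def by auto
  with G11 have "v \<noteq> 0"
    by (metis less_irrefl zero_index)
  then have "(\<Sum>i\<in>UNIV. \<Sum>j\<in>UNIV. G i j * v$i * v$j) > 0"
    by (rule pos)
  then have "G 1 1 * det2 G > 0"
    by (simp add: det2_def sum_2 v sym algebra_simps power2_eq_square)
  with G11 show ?thesis
    by (simp add: zero_less_mult_iff)
qed

section \<open>Riemannian metrics on a planar chart\<close>

lemma riemann_same_pair [simp]: "riemann g x r s m m = 0"
  unfolding riemann_def by simp

lemma riemann_swap_pair: "riemann g x r s n m = - riemann g x r s m n"
  unfolding riemann_def by simp

definition cov2 :: "(pt \<Rightarrow> idx \<Rightarrow> idx \<Rightarrow> real) \<Rightarrow> (pt \<Rightarrow> idx \<Rightarrow> idx \<Rightarrow> real) \<Rightarrow> pt \<Rightarrow> idx \<Rightarrow> idx \<Rightarrow> idx \<Rightarrow> real" where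
  "cov2 g H x c a b = pd c (\<lambda>y. H y a b) x
     - (\<Sum>d\<in>UNIV. christ g x d c a * H x d b) - (\<Sum>d\<in>UNIV. christ g x d c b * H x a d)"

text \<open>\<open>rot g K y\<close> is \<open>det2 (g y)\<close> times the raised field \<open>K\<close> turned by a right angle, see \<open>raise_eq_rot\<close>.\<close>

definition rot :: "(pt \<Rightarrow> idx \<Rightarrow> idx \<Rightarrow> real) \<Rightarrow> (pt \<Rightarrow> idx \<Rightarrow> real) \<Rightarrow> pt \<Rightarrow> idx \<Rightarrow> real" where
  "rot g K y c = g y c 2 * K y 1 - g y c 1 * K y 2"

text \<open>\<open>E c a f b\<close> is \<open>\<partial>\<^sub>c\<partial>\<^sub>a g\<^sub>f\<^sub>b\<close> computed by differentiating the compatibility equation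
  \<open>\<partial>g = \<Gamma> g + \<Gamma> g\<close>, with \<open>C = \<Gamma>\<close> and \<open>DC = \<partial>\<Gamma>\<close>; \<open>R\<close> is the Riemann tensor.\<close>

lemma compatibility_derivative_commutator:
  fixes G :: "idx \<Rightarrow> idx \<Rightarrow> real" and C :: "idx \<Rightarrow> idx \<Rightarrow> idx \<Rightarrow> real"
    and DC :: "idx \<Rightarrow> idx \<Rightarrow> idx \<Rightarrow> idx \<Rightarrow> real"
  assumes sym: "G 2 1 = G 1 2"
  defines "R \<equiv> \<lambda>e b c a. DC c e a b - DC a e c b + (\<Sum>l\<in>UNIV. C e c l * C l a b) - (\<Sum>l\<in>UNIV. C e a l * C l c b)"
    and "DG \<equiv> \<lambda>c i j. (\<Sum>l\<in>UNIV. C l c i * G l j + C l c j * G i l)"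
  defines "E \<equiv> \<lambda>c a f b. (\<Sum>l\<in>UNIV. DC c l a f * G l b + C l a f * DG c l b + DC c l a b * G f l + C l a b * DG c f l)"
  shows "E c a f b - E a c f b = (\<Sum>e\<in>UNIV. G f e * R e b c a) + (\<Sum>e\<in>UNIV. G b e * R e f c a)"
  using exhaust_2[of c] exhaust_2[of a] exhaust_2[of f] exhaust_2[of b]
  by (elim disjE) (simp_all add: R_def DG_def E_def sum_2 sym algebra_simps)

text \<open>\<open>Q c a b\<close> is \<open>\<nabla>\<^sub>c\<nabla>\<^sub>a W\<^sub>b\<close> written in coordinates, with \<open>DW = \<partial>W\<close> and \<open>DDW = \<partial>\<partial>W\<close>.\<close>

lemma ricci_identity_algebra:
  fixes W :: "idx \<Rightarrow> real" and DW :: "idx \<Rightarrow> idx \<Rightarrow> real" and DDW C :: "idx \<Rightarrow> idx \<Rightarrow> idx \<Rightarrow> real"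
    and DC :: "idx \<Rightarrow> idx \<Rightarrow> idx \<Rightarrow> idx \<Rightarrow> real"
  assumes C_sym: "\<And>k. C k 2 1 = C k 1 2" and DDW_sym: "\<And>b. DDW 2 1 b = DDW 1 2 b"
  defines "CW \<equiv> \<lambda>a b. DW a b - (\<Sum>d\<in>UNIV. C d a b * W d)"
  defines "P \<equiv> \<lambda>c a b. DDW c a b - (\<Sum>d\<in>UNIV. DC c d a b * W d + C d a b * DW c d)"
  defines "Q \<equiv> \<lambda>c a b. P c a b - (\<Sum>d\<in>UNIV. C d c a * CW d b) - (\<Sum>d\<in>UNIV. C d c b * CW a d)"
  defines "R \<equiv> \<lambda>e b c a. DC c e a b - DC a e c b + (\<Sum>l\<in>UNIV. C e c l * C l a b) - (\<Sum>l\<in>UNIV. C e a l * C l c b)"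
  shows "Q c a b - Q a c b = - (\<Sum>e\<in>UNIV. R e b c a * W e)"
  using exhaust_2[of c] exhaust_2[of a] exhaust_2[of b]
  by (elim disjE) (simp_all add: Q_def P_def CW_def R_def sum_2 C_sym DDW_sym algebra_simps)

locale riemannian_chart =
  fixes U :: "pt set" and g :: "pt \<Rightarrow> idx \<Rightarrow> idx \<Rightarrow> real"
  assumes metric: "riem_metric U g"
begin

lemma open_U: "open U"
  using metric unfolding riem_metric_def by blast

lemma metric_sym: "y \<in> U \<Longrightarrow> g y i j = g y j i"
  using metric unfolding riem_metric_def by blast

lemma smooth_metric [simp]: "smooth_on U (\<lambda>y. g y i j)"
  using metric unfolding riem_metric_def by blast

lemma det2_metric_pos: "y \<in> U \<Longrightarrow> det2 (g y) > 0"
  using metric metric_sym[of y 2 1] unfolding riem_metric_def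
  by (intro det2_pos_if_pos_definite) auto

lemma sym_matrix2_metric: "y \<in> U \<Longrightarrow> sym_matrix2 (g y)"
  using metric_sym[of y 2 1] det2_metric_pos[of y] by unfold_locales auto

lemma ginv_eq_inv2: "y \<in> U \<Longrightarrow> ginv g y i j = inv2 (g y) i j"
  unfolding ginv_def using sym_matrix2.matrix_inv_eq_inv2[OF sym_matrix2_metric] by simp

lemmas smooth_on_intros [simp] =
  smooth_on_add[OF open_U] smooth_on_diff[OF open_U] smooth_on_minus[OF open_U]
  smooth_on_mult[OF open_U] smooth_on_divide_const[OF open_U] smooth_on_sum[OF open_U]

lemmas pd_smooth = pd_smooth_simps[OF open_U]

lemma smooth_det2_metric [simp]: "smooth_on U (\<lambda>y. det2 (g y))"
  unfolding det2_def by simp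

lemma smooth_ginv [simp]: "smooth_on U (\<lambda>y. ginv g y i j)"
proof (rule smooth_on_cong[OF open_U])
  show "smooth_on U (\<lambda>y. adj2 (g y) i j / det2 (g y))"
    using det2_metric_pos unfolding adj2_def
    by (intro smooth_on_divide[OF open_U]) (auto simp: less_le)
qed (simp add: ginv_eq_inv2 inv2_def)

lemma smooth_christ [simp]: "smooth_on U (\<lambda>y. christ g y k i j)"
  unfolding christ_def by (intro smooth_on_intros smooth_on_const smooth_ginv smooth_on_pd smooth_metric) simp

lemma smooth_riemann [simp]: "smooth_on U (\<lambda>y. riemann g y r s m n)"
  unfolding riemann_def by simp

lemma smooth_ricci [simp]: "smooth_on U (\<lambda>y. ricci g y a b)"
  unfolding ricci_def by simp

lemma smooth_scal [simp]: "smooth_on U (scal g)"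
  unfolding scal_def[abs_def] by simp

lemma smooth_cov1 [simp]: "(\<And>e. smooth_on U (\<lambda>y. W y e)) \<Longrightarrow> smooth_on U (\<lambda>y. cov1 g W y a b)"
  unfolding cov1_def by simp

lemma pd_metric_sym: "y \<in> U \<Longrightarrow> pd k (\<lambda>y. g y i j) y = pd k (\<lambda>y. g y j i) y"
  by (rule pd_cong_open[OF open_U]) (auto simp: metric_sym)

lemma christ_sym: "y \<in> U \<Longrightarrow> christ g y k i j = christ g y k j i"
  unfolding christ_def by (simp add: pd_metric_sym[of y _ i j] algebra_simps)

lemma pd_metric_eq_christ:
  assumes y: "y \<in> U"
  shows "pd k (\<lambda>y. g y i j) y = (\<Sum>l\<in>UNIV. christ g y l k i * g y l j + christ g y l k j * g y i l)"
proof -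
  interpret sym_matrix2 "g y"
    by (rule sym_matrix2_metric[OF y])
  show ?thesis
    unfolding christ_def ginv_eq_inv2[OF y]
    by (rule christoffel_compatible) (rule pd_metric_sym[OF y])
qed

lemma pd_pd_metric:
  assumes x: "x \<in> U"
  shows "pd c (pd a (\<lambda>y. g y f b)) x =
     (\<Sum>l\<in>UNIV. pd c (\<lambda>y. christ g y l a f) x * g x l b
        + christ g x l a f * (\<Sum>m\<in>UNIV. christ g x m c l * g x m b + christ g x m c b * g x l m)
        + pd c (\<lambda>y. christ g y l a b) x * g x f l
        + christ g x l a b * (\<Sum>m\<in>UNIV. christ g x m c f * g x m l + christ g x m c l * g x f m))"
proof -
  have "pd c (pd a (\<lambda>y. g y f b)) x
      = pd c (\<lambda>y. \<Sum>l\<in>UNIV. christ g y l a f * g y l b + christ g y l a b * g y f l) x"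
    by (rule pd_cong_open[OF open_U x]) (rule pd_metric_eq_christ)
  also have "\<dots> = (\<Sum>l\<in>UNIV. pd c (\<lambda>y. christ g y l a f) x * g x l b + christ g x l a f * pd c (\<lambda>y. g y l b) x
       + pd c (\<lambda>y. christ g y l a b) x * g x f l + christ g x l a b * pd c (\<lambda>y. g y f l) x)"
    using x by (simp add: pd_smooth add.assoc)
  finally show ?thesis
    by (simp only: pd_metric_eq_christ[OF x])
qed

lemma riemann_lowered_antisym:
  assumes x: "x \<in> U"
  shows "(\<Sum>e\<in>UNIV. g x f e * riemann g x e b c a) + (\<Sum>e\<in>UNIV. g x b e * riemann g x e f c a) = 0"
proof -
  have "(\<Sum>e\<in>UNIV. g x f e * riemann g x e b c a) + (\<Sum>e\<in>UNIV. g x b e * riemann g x e f c a)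
     = pd c (pd a (\<lambda>y. g y f b)) x - pd a (pd c (\<lambda>y. g y f b)) x"
    unfolding pd_pd_metric[OF x] riemann_def
    by (rule compatibility_derivative_commutator[where DC = "\<lambda>c l a f. pd c (\<lambda>y. christ g y l a f) x", symmetric])
      (rule metric_sym[OF x])
  also have "\<dots> = 0"
    using pd_pd_commute[OF open_U smooth_metric x] by simp
  finally show ?thesis .
qed

lemma ricci_eq_half_scal:
  assumes x: "x \<in> U"
  shows "ricci g x a b = scal g x / 2 * g x a b"
proof -
  interpret sym_matrix2 "g x"
    by (rule sym_matrix2_metric[OF x])
  show ?thesis
    unfolding scal_def ginv_eq_inv2[OF x]
  proof (rule ricci_eq_half_trace[where A = "\<lambda>e b. riemann g x e b 1 2"])
    show "\<And>f b. (\<Sum>e\<in>UNIV. g x f e * riemann g x e b 1 2) + (\<Sum>e\<in>UNIV. g x b e * riemann g x e f 1 2) = 0"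
      by (rule riemann_lowered_antisym[OF x])
    show "\<And>b. ricci g x b 1 = - riemann g x 2 b 1 2" "\<And>b. ricci g x b 2 = riemann g x 1 b 1 2"
      unfolding ricci_def by (simp_all add: sum_2, subst riemann_swap_pair, simp)
  qed
qed

lemma riemann_eq_scal:
  assumes x: "x \<in> U"
  shows "riemann g x e b c a = scal g x / 2 * ((if e = c then g x b a else 0) - (if e = a then g x b c else 0))"
proof -
  have "riemann g x 1 b 1 2 = scal g x / 2 * g x b 2" "riemann g x 2 b 1 2 = - (scal g x / 2 * g x b 1)"
    using ricci_eq_half_scal[OF x, of b 2] ricci_eq_half_scal[OF x, of b 1]
    unfolding ricci_def by (simp_all add: sum_2, subst (asm) riemann_swap_pair, simp)
  then show ?thesis
    using exhaust_2[of e] exhaust_2[of c] exhaust_2[of a]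
    by (elim disjE) (simp_all add: riemann_swap_pair[of g x _ b 2 1])
qed

lemma ricci_identity:
  assumes x: "x \<in> U" and W: "\<And>e. smooth_on U (\<lambda>y. W y e)"
  shows "cov2 g (cov1 g W) x c a b - cov2 g (cov1 g W) x a c b = - (\<Sum>e\<in>UNIV. riemann g x e b c a * W x e)"
proof -
  have pd_cov1: "pd c (\<lambda>y. cov1 g W y a b) x = pd c (pd a (\<lambda>y. W y b)) x
       - (\<Sum>d\<in>UNIV. pd c (\<lambda>y. christ g y d a b) x * W x d + christ g x d a b * pd c (\<lambda>y. W y d) x)" for c a b
    unfolding cov1_def using x W by (simp add: pd_smooth)
  show ?thesis
    unfolding cov2_def pd_cov1 unfolding cov1_def riemann_def
    by (rule ricci_identity_algebra[where DC = "\<lambda>c l a f. pd c (\<lambda>y. christ g y l a f) x"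
          and DW = "\<lambda>c d. pd c (\<lambda>y. W y d) x" and DDW = "\<lambda>c a b. pd c (pd a (\<lambda>y. W y b)) x"])
       (auto intro: christ_sym[OF x] pd_pd_commute[OF open_U W x])
qed

lemma traced_ricci_identity:
  assumes x: "x \<in> U" and W: "\<And>e. smooth_on U (\<lambda>y. W y e)"
  shows "(\<Sum>c\<in>UNIV. \<Sum>b\<in>UNIV. ginv g x c b * (cov2 g (cov1 g W) x c a b - cov2 g (cov1 g W) x a c b))
    = scal g x / 2 * W x a"
  unfolding ricci_identity[OF x W] riemann_eq_scal[OF x] ginv_eq_inv2[OF x]
  using exhaust_2[of a] det2_metric_pos[OF x] metric_sym[OF x, of 2 1]
  by (elim disjE) (simp_all add: sum_2 inv2_simps field_simps, simp_all add: det2_def algebra_simps)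

lemma trace_christ:
  assumes y: "y \<in> U"
  shows "christ g y 1 c 1 + christ g y 2 c 2 = pd c (\<lambda>y. det2 (g y)) y / (2 * det2 (g y))"
proof -
  interpret sym_matrix2 "g y"
    by (rule sym_matrix2_metric[OF y])
  have "pd c (\<lambda>y. det2 (g y)) y = pd c (\<lambda>y. g y 1 1) y * g y 2 2 + g y 1 1 * pd c (\<lambda>y. g y 2 2) y
      - pd c (\<lambda>y. g y 1 2) y * g y 2 1 - g y 1 2 * pd c (\<lambda>y. g y 2 1) y"
    unfolding det2_def using y by (simp add: pd_smooth)
  moreover have "(\<Sum>e\<in>UNIV. christ g y e c e) = (pd c (\<lambda>y. g y 1 1) y * g y 2 2 + g y 1 1 * pd c (\<lambda>y. g y 2 2) y
      - pd c (\<lambda>y. g y 1 2) y * g y 2 1 - g y 1 2 * pd c (\<lambda>y. g y 2 1) y) / (2 * det2 (g y))"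
    unfolding christ_def ginv_eq_inv2[OF y]
    by (rule trace_christoffel) (rule pd_metric_sym[OF y])
  ultimately show ?thesis
    by (simp add: sum_2)
qed

lemma pd_half_log_det_commute:
  assumes x: "x \<in> U"
  shows "pd 1 (\<lambda>y. pd 2 (\<lambda>y. det2 (g y)) y / (2 * det2 (g y))) x
       = pd 2 (\<lambda>y. pd 1 (\<lambda>y. det2 (g y)) y / (2 * det2 (g y))) x"
proof -
  have "2 * det2 (g x) \<noteq> 0"
    using det2_metric_pos[OF x] by simp
  then have "pd c (\<lambda>y. pd c' (\<lambda>y. det2 (g y)) y / (2 * det2 (g y))) x
      = (pd c (pd c' (\<lambda>y. det2 (g y))) x * (2 * det2 (g x))
         - pd c' (\<lambda>y. det2 (g y)) x * (2 * pd c (\<lambda>y. det2 (g y)) x)) / ((2 * det2 (g x)) * (2 * det2 (g x)))"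
    for c c'
    using x by (simp add: pd_divide_smooth[OF open_U] pd_smooth)
  then show ?thesis
    using pd_pd_commute[OF open_U smooth_det2_metric x, of 1 2] by (simp add: algebra_simps)
qed

lemma raise_eq_rot:
  assumes y: "y \<in> U"
  shows "raise g K y 1 = rot g K y 2 / det2 (g y)" "raise g K y 2 = - rot g K y 1 / det2 (g y)"
  unfolding raise_def rot_def using y det2_metric_pos[OF y]
  by (simp_all add: sum_2 ginv_eq_inv2 inv2_simps metric_sym[OF y, of 2 1] field_simps)

context
  fixes K :: "pt \<Rightarrow> idx \<Rightarrow> real"
  assumes killing: "killing U g K"
begin

lemma smooth_killing [simp]: "smooth_on U (\<lambda>y. K y a)"
  using killing unfolding killing_def by blast

lemma cov1_killing_antisym: "y \<in> U \<Longrightarrow> cov1 g K y a b = - cov1 g K y b a"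
  using killing unfolding killing_def by (simp add: eq_neg_iff_add_eq_0)

lemma cov1_killing_diag [simp]: "y \<in> U \<Longrightarrow> cov1 g K y a a = 0"
  using cov1_killing_antisym[of y a a] by simp

lemma cov2_cov1_killing_antisym:
  assumes y: "y \<in> U"
  shows "cov2 g (cov1 g K) y c a b = - cov2 g (cov1 g K) y c b a"
proof -
  have "pd c (\<lambda>y. cov1 g K y a b) y = pd c (\<lambda>y. - cov1 g K y b a) y"
    by (rule pd_cong_open[OF open_U y]) (rule cov1_killing_antisym)
  also have "\<dots> = - pd c (\<lambda>y. cov1 g K y b a) y"
    using y by (simp add: pd_smooth)
  finally show ?thesis
    unfolding cov2_def using y
    by (simp add: cov1_killing_antisym[OF y, of _ a] cov1_killing_antisym[OF y, of b] sum_negf)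
qed

lemma cov2_cov1_killing:
  assumes y: "y \<in> U"
  shows "cov2 g (cov1 g K) y c 1 2 = scal g y / 2 * rot g K y c"
proof -
  have diag: "cov2 g (cov1 g K) y c a a = 0" for c a
    using cov2_cov1_killing_antisym[OF y, of c a a] by simp
  have "cov2 g (cov1 g K) y c 1 2 = (\<Sum>e\<in>UNIV. riemann g y e c 1 2 * K y e)"
    using ricci_identity[where W = K and c = 1 and a = 2 and b = c, OF y smooth_killing] exhaust_2[of c]
      cov2_cov1_killing_antisym[OF y, of _ 2 1] diag
    by auto
  then show ?thesis
    using y by (simp add: sum_2 riemann_eq_scal rot_def algebra_simps)
qed

lemma pd_cov1_killing:
  assumes y: "y \<in> U"
  shows "pd c (\<lambda>y. cov1 g K y 1 2) y = pd c (\<lambda>y. det2 (g y)) y / (2 * det2 (g y)) * cov1 g K y 1 2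
    + scal g y / 2 * rot g K y c"
  using cov2_cov1_killing[OF y, of c] y
  unfolding trace_christ[OF y, symmetric] cov2_def
  by (simp add: sum_2 cov1_killing_antisym[OF y, of 2 1] algebra_simps)

lemma killing_divergence_free: "y \<in> U \<Longrightarrow> (\<Sum>a\<in>UNIV. \<Sum>b\<in>UNIV. ginv g y a b * cov1 g K y a b) = 0"
  by (simp add: sum_2 ginv_eq_inv2 inv2_simps cov1_killing_antisym[of y 2 1] metric_sym[of y 2 1] algebra_simps)

lemma curl_rot_killing:
  assumes x: "x \<in> U"
  shows "pd 1 (\<lambda>y. rot g K y 2) x - pd 2 (\<lambda>y. rot g K y 1) x
    - pd 1 (\<lambda>y. det2 (g y)) x / (2 * det2 (g x)) * rot g K x 2
    + pd 2 (\<lambda>y. det2 (g y)) x / (2 * det2 (g x)) * rot g K x 1 = 0"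
proof -
  interpret sym_matrix2 "g x"
    by (rule sym_matrix2_metric[OF x])
  have pd_rot: "pd c (\<lambda>y. rot g K y c') x = pd c (\<lambda>y. g y c' 2) x * K x 1 + g x c' 2 * pd c (\<lambda>y. K y 1) x
     - (pd c (\<lambda>y. g y c' 1) x * K x 2 + g x c' 1 * pd c (\<lambda>y. K y 2) x)" for c c'
    unfolding rot_def using x by (simp add: pd_smooth)
  have "pd 1 (\<lambda>y. rot g K y 2) x - pd 2 (\<lambda>y. rot g K y 1) x
      - (\<Sum>e\<in>UNIV. christ g x e 1 e) * rot g K x 2 + (\<Sum>e\<in>UNIV. christ g x e 2 e) * rot g K x 1
      = det2 (g x) * (\<Sum>a\<in>UNIV. \<Sum>b\<in>UNIV. ginv g x a b * cov1 g K x a b)"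
    unfolding pd_rot
    unfolding rot_def cov1_def christ_def ginv_eq_inv2[OF x]
    by (rule rotated_curl_eq_det_divergence) (rule pd_metric_sym[OF x])
  then show ?thesis
    using killing_divergence_free[OF x] trace_christ[OF x] by (simp add: sum_2)
qed

text \<open>Writing \<open>\<phi> = cov1 g K _ 1 2\<close>, the only independent component of \<open>\<nabla>K\<close>, the equation
  \<open>pd_cov1_killing\<close> expresses \<open>d\<phi>\<close> through \<open>\<phi>\<close>, the curvature and \<open>K\<close>; its integrability condition
  \<open>pd 1 (pd 2 \<phi>) = pd 2 (pd 1 \<phi>)\<close> is exactly \<open>K(R) = 0\<close>.\<close>

lemma killing_preserves_scal:
  assumes x: "x \<in> U"
  shows "(\<Sum>a\<in>UNIV. raise g K x a * pd a (scal g) x) = 0"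
proof -
  define \<phi> where "\<phi> y = cov1 g K y 1 2" for y
  define Q where "Q c y = pd c (\<lambda>y. det2 (g y)) y / (2 * det2 (g y))" for c y
  define V where "V c y = rot g K y c" for c y
  have smooth: "smooth_on U \<phi>" "smooth_on U (Q c)" "smooth_on U (V c)" for c
    unfolding \<phi>_def Q_def V_def rot_def
    using det2_metric_pos by (auto intro!: smooth_on_divide[OF open_U] simp: less_le)
  have pd_\<phi>: "pd c \<phi> y = Q c y * \<phi> y + scal g y / 2 * V c y" if "y \<in> U" for c y
    unfolding \<phi>_def Q_def V_def using pd_cov1_killing[OF that] .
  have pd_pd_\<phi>: "pd c (pd c' \<phi>) x = pd c (Q c') x * \<phi> x + Q c' x * (Q c x * \<phi> x + scal g x / 2 * V c x)
      + (pd c (scal g) x * V c' x + scal g x * pd c (V c') x) / 2" for c c'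
  proof -
    have "pd c (pd c' \<phi>) x = pd c (\<lambda>y. Q c' y * \<phi> y + scal g y / 2 * V c' y) x"
      by (rule pd_cong_open[OF open_U x]) (rule pd_\<phi>)
    also have "\<dots> = pd c (Q c') x * \<phi> x + Q c' x * pd c \<phi> x
        + (pd c (scal g) x * V c' x + scal g x * pd c (V c') x) / 2"
      using x smooth by (simp add: pd_smooth)
    finally show ?thesis
      using pd_\<phi>[OF x] by simp
  qed
  have "pd 1 (scal g) x * V 2 x - pd 2 (scal g) x * V 1 x
      = 2 * (pd 1 (pd 2 \<phi>) x - pd 2 (pd 1 \<phi>) x)
        - 2 * (pd 1 (Q 2) x - pd 2 (Q 1) x) * \<phi> x
        - scal g x * (pd 1 (V 2) x - pd 2 (V 1) x - Q 1 x * V 2 x + Q 2 x * V 1 x)"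
    unfolding pd_pd_\<phi> by (simp add: field_simps)
  also have "\<dots> = 0"
    using pd_pd_commute[OF open_U smooth(1) x] pd_half_log_det_commute[OF x] curl_rot_killing[OF x]
    unfolding Q_def V_def by simp
  finally show ?thesis
    using det2_metric_pos[OF x]
    by (simp add: sum_2 raise_eq_rot[OF x] V_def field_simps)
qed

end

end

section \<open>The near-horizon equation\<close>

context sym_matrix2
begin

text \<open>Here \<open>HG\<close> is the Hessian of \<open>\<Gamma>\<close> forced by the Killing equation, \<open>P\<close> its covariant derivative
  computed from that formula by the Leibniz rule, and \<open>traced\<close> is the contracted Ricci identity.\<close>

lemma traced_commutator_imp_gradient_identity:
  fixes CX :: "idx \<Rightarrow> idx \<Rightarrow> real" and Gv Xv DS :: "idx \<Rightarrow> real" and Gam S lam :: real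
    and P :: "idx \<Rightarrow> idx \<Rightarrow> idx \<Rightarrow> real"
  assumes CX: "\<And>a b. CX a b + CX b a = Xv a * Xv b + 2 * (lam - S/2) * G a b"
  defines "HG \<equiv> \<lambda>a b. - (1/2) * (Gv a * Xv b + Gv b * Xv a) - (1/2) * Gam * Xv a * Xv b - Gam * (lam - S/2) * G a b"
  assumes P: "\<And>c a b. P c a b = - (1/2) * (HG c a * Xv b + Gv a * CX c b + HG c b * Xv a + Gv b * CX c a)
      - (1/2) * (Gv c * Xv a * Xv b + Gam * CX c a * Xv b + Gam * Xv a * CX c b)
      - (Gv c * (lam - S/2) + Gam * (- (1/2) * DS c)) * G a b"
    and traced: "(\<Sum>c\<in>UNIV. \<Sum>b\<in>UNIV. inv2 G c b * (P c a b - P a c b)) = S/2 * Gv a"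
  shows "(S - 2 * lam / 3) * Gv a + (2 * Gam / 3) * DS a
      = 2 * (\<Sum>b\<in>UNIV. (\<Sum>c\<in>UNIV. inv2 G b c * (Gam * Xv c + Gv c)) * ((1/2) * (CX a b - CX b a)))"
proof -
  define d where "d = det2 G"
  note adj = adj2_simps[of G, unfolded sym]
  have CX_diag: "CX 1 1 = (Xv 1 * Xv 1 + 2 * (lam - S/2) * G 1 1) / 2"
    "CX 2 2 = (Xv 2 * Xv 2 + 2 * (lam - S/2) * G 2 2) / 2"
    "CX 2 1 = Xv 1 * Xv 2 + 2 * (lam - S/2) * G 1 2 - CX 1 2"
    using CX[of 1 1] CX[of 2 2] CX[of 1 2] sym by (simp_all add: algebra_simps)
  define L where "L = (S - 2 * lam / 3) * Gv a + (2 * Gam / 3) * DS a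
      - 2 * (\<Sum>b\<in>UNIV. (\<Sum>c\<in>UNIV. inv2 G b c * (Gam * Xv c + Gv c)) * ((1/2) * (CX a b - CX b a)))"
  define M where "M = (\<Sum>c\<in>UNIV. \<Sum>b\<in>UNIV. inv2 G c b * (P c a b - P a c b)) - S/2 * Gv a"
  have dL: "d * L = (S - 2 * lam / 3) * Gv a * d + (2 * Gam / 3) * DS a * d
      - 2 * (\<Sum>b\<in>UNIV. (\<Sum>c\<in>UNIV. adj2 G b c * (Gam * Xv c + Gv c)) * ((1/2) * (CX a b - CX b a)))"
    unfolding L_def inv2_def d_def using det_nonzero
    by (simp add: sum_2 field_simps)
  have dM: "d * M = (\<Sum>c\<in>UNIV. \<Sum>b\<in>UNIV. adj2 G c b * (P c a b - P a c b)) - d * (S/2 * Gv a)"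
    unfolding M_def inv2_def d_def using det_nonzero
    by (simp add: sum_distrib_left sum_divide_distrib algebra_simps)
  have "d * L = - (4/3) * (d * M)"
    unfolding dL dM
    unfolding P HG_def d_def det2_def
    using exhaust_2[of a]
    by (elim disjE) (simp_all add: sum_2 adj sym CX_diag field_simps)
  moreover have "M = 0"
    unfolding M_def using traced by simp
  ultimately show ?thesis
    using det_nonzero unfolding L_def d_def by simp
qed

end

locale near_horizon_geometry = riemannian_chart +
  fixes X :: "pt \<Rightarrow> idx \<Rightarrow> real" and Gam :: "pt \<Rightarrow> real" and lam :: real
  assumes smooth_X [simp]: "smooth_on U (\<lambda>x. X x a)"
    and einstein: "x \<in> U \<Longrightarrow> ricci g x a b
        = (1/2) * X x a * X x b - (1/2) * (cov1 g X x a b + cov1 g X x b a) + lam * g x a b"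
    and smooth_Gam [simp]: "smooth_on U Gam"
    and killing_K: "killing U g (\<lambda>x a. Gam x * X x a + pd a Gam x)"
begin

lemma sym_cov1_X:
  "y \<in> U \<Longrightarrow> cov1 g X y a b + cov1 g X y b a = X y a * X y b + 2 * (lam - scal g y / 2) * g y a b"
  using einstein[of y a b] ricci_eq_half_scal[of y a b] by algebra

lemma hessian_Gam:
  assumes y: "y \<in> U"
  shows "cov1 g (\<lambda>y b. pd b Gam y) y a b = - (1/2) * (pd a Gam y * X y b + pd b Gam y * X y a)
      - (1/2) * Gam y * X y a * X y b - Gam y * (lam - scal g y / 2) * g y a b"
proof -
  have cov1_K: "cov1 g (\<lambda>x a. Gam x * X x a + pd a Gam x) y a b
     = pd a Gam y * X y b + Gam y * cov1 g X y a b + cov1 g (\<lambda>y b. pd b Gam y) y a b" for a b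
    unfolding cov1_def using y by (simp add: pd_smooth sum_2 algebra_simps)
  have hessian_sym: "cov1 g (\<lambda>y b. pd b Gam y) y b a = cov1 g (\<lambda>y b. pd b Gam y) y a b"
    unfolding cov1_def using pd_pd_commute[OF open_U smooth_Gam y, of a b] christ_sym[OF y] by simp
  have "cov1 g (\<lambda>x a. Gam x * X x a + pd a Gam x) y a b + cov1 g (\<lambda>x a. Gam x * X x a + pd a Gam x) y b a = 0"
    using killing_K y unfolding killing_def by blast
  then show ?thesis
    unfolding cov1_K hessian_sym using sym_cov1_X[OF y, of a b] by algebra
qed

lemma cov2_hessian_Gam:
  assumes x: "x \<in> U"
  shows "cov2 g (cov1 g (\<lambda>y b. pd b Gam y)) x c a b =
     - (1/2) * (cov1 g (\<lambda>y b. pd b Gam y) x c a * X x b + pd a Gam x * cov1 g X x c b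
                + cov1 g (\<lambda>y b. pd b Gam y) x c b * X x a + pd b Gam x * cov1 g X x c a)
     - (1/2) * (pd c Gam x * X x a * X x b + Gam x * cov1 g X x c a * X x b + Gam x * X x a * cov1 g X x c b)
     - (pd c Gam x * (lam - scal g x / 2) + Gam x * (- (1/2) * pd c (scal g) x)) * g x a b"
proof -
  have pd_hessian: "pd c (\<lambda>y. cov1 g (\<lambda>y b. pd b Gam y) y a b) x
      = pd c (\<lambda>y. - (1/2) * (pd a Gam y * X y b + pd b Gam y * X y a)
         - (1/2) * Gam y * X y a * X y b - Gam y * (lam - scal g y / 2) * g y a b) x"
    by (rule pd_cong_open[OF open_U x]) (rule hessian_Gam)
  have pd_dGam: "pd c (\<lambda>y. pd a Gam y) x
      = cov1 g (\<lambda>y b. pd b Gam y) x c a + (\<Sum>d\<in>UNIV. christ g x d c a * pd d Gam x)" for a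
    unfolding cov1_def by simp
  have pd_X: "pd c (\<lambda>y. X y a) x = cov1 g X x c a + (\<Sum>d\<in>UNIV. christ g x d c a * X x d)" for a
    unfolding cov1_def by simp
  show ?thesis
    unfolding cov2_def pd_hessian
    by (simp only: pd_smooth pd_const x smooth_on_intros smooth_on_const smooth_on_pd smooth_X smooth_Gam
        smooth_metric smooth_scal)
      (use x in \<open>simp add: pd_dGam pd_X pd_metric_eq_christ hessian_Gam sum_2 algebra_simps\<close>)
qed

lemma gradient_identity:
  assumes x: "x \<in> U"
  shows "(scal g x - 2 * lam / 3) * pd d Gam x + (2 * Gam x / 3) * pd d (scal g) x
           = 2 * (\<Sum>b\<in>UNIV. raise g (\<lambda>y a. Gam y * X y a + pd a Gam y) x b
                    * ((1/2) * (cov1 g X x d b - cov1 g X x b d)))"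
proof -
  interpret sym_matrix2 "g x"
    by (rule sym_matrix2_metric[OF x])
  show ?thesis
    unfolding raise_def ginv_eq_inv2[OF x]
  proof (rule traced_commutator_imp_gradient_identity[where P = "cov2 g (cov1 g (\<lambda>y b. pd b Gam y)) x"])
    show "\<And>a b. cov1 g X x a b + cov1 g X x b a = X x a * X x b + 2 * (lam - scal g x / 2) * g x a b"
      by (rule sym_cov1_X[OF x])
    show "(\<Sum>c\<in>UNIV. \<Sum>b\<in>UNIV. inv2 (g x) c b * (cov2 g (cov1 g (\<lambda>y b. pd b Gam y)) x c d b
        - cov2 g (cov1 g (\<lambda>y b. pd b Gam y)) x d c b)) = scal g x / 2 * pd d Gam x"
      using traced_ricci_identity[OF x, of "\<lambda>y b. pd b Gam y" d] by (simp add: ginv_eq_inv2[OF x])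
  qed (simp only: cov2_hessian_Gam[OF x] hessian_Gam[OF x])
qed

lemma lie_derivative_Gam_identity:
  assumes x: "x \<in> U"
  shows "(scal g x - 2 * lam / 3) * (\<Sum>a\<in>UNIV. raise g (\<lambda>y a. Gam y * X y a + pd a Gam y) x a * pd a Gam x) = 0"
proof -
  define k where "k a = raise g (\<lambda>y a. Gam y * X y a + pd a Gam y) x a" for a
  have "(scal g x - 2 * lam / 3) * (\<Sum>a\<in>UNIV. k a * pd a Gam x)
      = (\<Sum>d\<in>UNIV. k d * ((scal g x - 2 * lam / 3) * pd d Gam x + (2 * Gam x / 3) * pd d (scal g) x))
        - (2 * Gam x / 3) * (\<Sum>a\<in>UNIV. k a * pd a (scal g) x)"
    by (simp add: sum_2 algebra_simps)
  also have "\<dots> = (\<Sum>d\<in>UNIV. k d * (2 * (\<Sum>b\<in>UNIV. k b * ((1/2) * (cov1 g X x d b - cov1 g X x b d)))))"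
    using killing_preserves_scal[OF killing_K x] unfolding k_def gradient_identity[OF x] by simp
  also have "\<dots> = 0"
    by (simp add: sum_2 algebra_simps)
  finally show ?thesis
    unfolding k_def .
qed

end

theorem mainTheorem6:
  fixes U :: "(real^2) set"
    and g :: "real^2 \<Rightarrow> 2 \<Rightarrow> 2 \<Rightarrow> real"
    and X :: "real^2 \<Rightarrow> 2 \<Rightarrow> real"
    and Gam :: "real^2 \<Rightarrow> real"
    and lam :: real
  assumes metric: "riem_metric U g"
    and X_smooth: "\<forall>a. smooth_on U (\<lambda>x. X x a)"
    and einstein: "\<forall>x\<in>U. \<forall>a b. ricci g x a b
        = (1/2) * X x a * X x b - (1/2) * (cov1 g X x a b + cov1 g X x b a) + lam * g x a b"
    and Gam_smooth: "smooth_on U Gam"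
    and Gam_pos: "\<forall>x\<in>U. Gam x > 0"
    and Kill: "killing U g (\<lambda>x a. Gam x * X x a + pd a Gam x)"
  shows "(\<forall>x\<in>U. \<forall>d.
           (scal g x - 2 * lam / 3) * pd d Gam x + (2 * Gam x / 3) * pd d (scal g) x
           = 2 * (\<Sum>b\<in>UNIV. raise g (\<lambda>y a. Gam y * X y a + pd a Gam y) x b
                    * ((1/2) * (cov1 g X x d b - cov1 g X x b d)))) \<and>
         (\<forall>x\<in>U. (scal g x - 2 * lam / 3)
           * (\<Sum>a\<in>UNIV. raise g (\<lambda>y a. Gam y * X y a + pd a Gam y) x a * pd a Gam x) = 0)"
proof -
  interpret near_horizon_geometry U g X Gam lam
    using metric X_smooth einstein Gam_smooth Kill by unfold_locales (auto simp: riemannian_chart_def)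
  show ?thesis
    using gradient_identity lie_derivative_Gam_identity by blast
qed

end
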